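(* Let $k$ have characteristic zero, $V$ have basis $x_1,\dots,x_n$ ($n\ge1$), $N\geq2$, $w$ a non-zero homogeneous potential of degree $N+1$, $A=A(w)$, $r_i=\partial_{x_i}(w)$, $R=\mathrm{span}\{r_i\}$. Fix $J\subset\{1,\dots,n\}$ with $(r_j)_{j\in J}$ a basis of $R$, dual basis $(r_j^* )_{j\in J}$ of $R^*$, and let $(x_i^* )$ be the dual basis of $V^*$. Consider the complex $C_w$: $$0\to A\otimes kc(w)\otimes A\xrightarrow{d_3}A\otimes R\otimes A\xrightarrow{d_2}A\otimes V\otimes A\xrightarrow{d_1}A\otimes A\to0$$ with $d_1(1\otimes v\otimes1)=v\otimes1-1\otimes v$, $d_2(1\otimes v_1\cdots v_N\otimes1)=\sum_{i}v_1\cdots v_{i-1}\otimes v_i\otimes v_{i+1}\cdots v_N$, $d_3(1\otimes c(w)\otimes1)=\sum_{i=1}^n x_i\otimes r_i\otimes1-1\otimes r_i\otimes x_i$; and the complex $C_w^\vee$: $$0\to A\otimes k1^*\otimes A\xrightarrow{d_1^*}A\otimes V^*\otimes A\xrightarrow{d_2^*}A\otimes R^*\otimes A\xrightarrow{d_3^*}A\otimes kc(w)^*\otimes A\to0$$ with $d_1^*(1^* )=\sum_i x_i\otimes x_i^*\otimes1-1\otimes x_i^*\otimes x_i$, $d_2^*(x_i^* )=\sum_{j\in J}\sum\big(\tfrac{\partial r_j}{\partial x_i}\big)_2\otimes r_j^*\otimes\big(\tfrac{\partial r_j}{\partial x_i}\big)_1$, and $d_3^*(r_i^* )=x_i\otimes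 c(w)^*\otimes1-1\otimes c(w)^*\otimes x_i+\sum_{j\notin J}r_i^*(r_j)\,(x_j\otimes c(w)^*\otimes1-1\otimes c(w)^*\otimes x_j)$ for $i\in J$. Define $A$-bimodule maps $f_0(1\otimes1)=c(w)^*$, $f_1(x_i)=r_i^*$ if $i\in J$ and $0$ if $i\notin J$, $f_2(r_i)=x_i^*$ ($i\in J$), $f_3(c(w))=1^*$, forming a diagram $f_3:A c(w)A\to A1^*A$, $f_2:ARA\to AV^*A$, $f_1:AVA\to AR^*A$, $f_0:AA\to Ac(w)^*A$. Then: (i) $f_1\circ d_2=d_2^*\circ f_2$; (ii) $f_2\circ d_3=d_1^*\circ f_3$ holds if and only if $\dim R=n$, and $f_0\circ d_1=d_3^*\circ f_1$ holds if and only if $\dim R=n$; (iii) if $C_w^\vee$ is exact at $A\otimes V^*\otimes A$ (equivalently $\mathrm{H}^1(A,A\otimes A)=0$ with outer bimodule structure), then $\dim R=n$.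
   Context: All tensor products are over $k$; elements $a\otimes v\otimes b$ of $A\otimes V\otimes A$ etc.; bimodule maps are determined by their values on $1\otimes(\cdot)\otimes 1$, written without the outer $1$'s. Cyclic derivative $\partial_x(p)=\sum_{p=uxv}vu$ and cyclic sum $c(a_1\cdots a_r)=\sum_i a_i\cdots a_ra_1\cdots a_{i-1}$ on monomials. The ordinary partial derivative $\frac{\partial}{\partial x}:T(V)\to T(V)\otimes T(V)$ is $\frac{\partial p}{\partial x}=\sum_{p=uxv}u\otimes v$ on monomials, written symbolically $\sum\big(\frac{\partial p}{\partial x}\big)_1\otimes\big(\frac{\partial p}{\partial x}\big)_2$ (images taken in $A\otimes A$). $A(w)=T(V)/(\partial_{x_1}w,\dots,\partial_{x_n}w)$. The complex $C_w^\vee$ is the image of $\mathrm{Hom}_{A\text{-}A}(C_w,A\otimes A)$ (outer bimodule structure on $A\otimes A$, resulting bimodule structure from the inner one, with Koszul sign convention) under the natural isomorphisms $\mathrm{Hom}_{A\text{-}A}(A\otimes F\otimes A,A\otimes A)\cong A\otimes F^*\otimes A$. *)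

theory Defs
  imports Main "HOL-Library.Function_Algebras"
begin

text \<open>Letters x_0,...,x_{n-1} are the naturals < n; monomials are words
  (nat list); elements of T(V) are coefficient functions nat list => k; elements of
  T(V) (x) T(V) are coefficient functions on pairs of words.  A free A-bimodule
  A (x) F (x) A with F having a basis indexed by a finite set B is represented by
  B-indexed families of elements of T(V)(x)T(V), taken modulo the kernel K of
  T(V)(x)T(V) -> A(x)A, i.e. K = I(x)T(V) + T(V)(x)I with I = (r_0,...,r_{n-1}).\<close>

type_synonym 'k ncp = "nat list \<Rightarrow> 'k"
type_synonym 'k tt = "nat list \<times> nat list \<Rightarrow> 'k"

inductive_set lspan :: "('a \<Rightarrow> 'k::comm_ring_1) set \<Rightarrow> ('a \<Rightarrow> 'k) set" for S where
  lspan_zero: "0 \<in> lspan S"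
| lspan_step: "x \<in> S \<Longrightarrow> y \<in> lspan S \<Longrightarrow> (\<lambda>a. c * x a + y a) \<in> lspan S"

definition mono :: "nat list \<Rightarrow> 'k::comm_ring_1 ncp" where
  "mono u = (\<lambda>v. if v = u then 1 else 0)"

definition ncmult :: "'k::comm_ring_1 ncp \<Rightarrow> 'k ncp \<Rightarrow> 'k ncp" where
  "ncmult p q = (\<lambda>a. \<Sum>i\<in>{0..length a}. p (take i a) * q (drop i a))"

text \<open>cyclic derivative: cycder w i = sum over w = u x_i v of v u\<close>
definition cycder :: "'k::comm_ring_1 ncp \<Rightarrow> nat \<Rightarrow> 'k ncp" where
  "cycder w i = (\<lambda>a. \<Sum>j\<in>{0..length a}. w (drop j a @ [i] @ take j a))"

definition pder :: "'k::comm_ring_1 ncp \<Rightarrow> nat \<Rightarrow> 'k tt" where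
  "pder p i = (\<lambda>(a, b). p (a @ [i] @ b))"

definition tens :: "'k::comm_ring_1 ncp \<Rightarrow> 'k ncp \<Rightarrow> 'k tt" where
  "tens p q = (\<lambda>(a, b). p a * q b)"

definition swap :: "'k tt \<Rightarrow> 'k tt" where
  "swap X = (\<lambda>(a, b). X (b, a))"

text \<open>act Y Z: (p (x) q) acting on (s (x) e (x) t) gives p s (x) e (x) t q\<close>
definition act :: "'k::comm_ring_1 tt \<Rightarrow> 'k tt \<Rightarrow> 'k tt" where
  "act Y Z = (\<lambda>(a, b). \<Sum>i\<in>{0..length a}. \<Sum>j\<in>{0..length b}.
      Y (take i a, drop j b) * Z (drop i a, take j b))"

text \<open>apply the bimodule map with generator images g (source basis index set B) to X\<close>
definition app :: "nat set \<Rightarrow> (nat \<Rightarrow> nat \<Rightarrow> 'k::comm_ring_1 tt) \<Rightarrow> (nat \<Rightarrow> 'k tt) \<Rightarrow> nat \<Rightarrow> 'k tt" where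
  "app B g X = (\<lambda>c. \<Sum>b\<in>B. act (X b) (g b c))"

definition fsupp :: "'k::zero tt \<Rightarrow> bool" where
  "fsupp X \<longleftrightarrow> finite {p. X p \<noteq> 0}"

text \<open>kernel of T(V)(x)T(V) -> A(w)(x)A(w)\<close>
definition idealK :: "nat \<Rightarrow> 'k::comm_ring_1 ncp \<Rightarrow> 'k tt set" where
  "idealK n w = lspan
     ({tens (ncmult (ncmult (mono u) (cycder w i)) (mono v)) (mono s) | u v s i. i < n}
    \<union> {tens (mono s) (ncmult (ncmult (mono u) (cycder w i)) (mono v)) | u v s i. i < n})"

definition eqmod :: "nat \<Rightarrow> 'k::comm_ring_1 ncp \<Rightarrow> nat set \<Rightarrow> (nat \<Rightarrow> 'k tt) \<Rightarrow> (nat \<Rightarrow> 'k tt) \<Rightarrow> bool" where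
  "eqmod n w C X Y \<longleftrightarrow> (\<forall>c\<in>C. X c - Y c \<in> idealK n w)"

definition homogeneous_of_degree :: "nat \<Rightarrow> nat \<Rightarrow> 'k::zero ncp \<Rightarrow> bool" where
  "homogeneous_of_degree n d w \<longleftrightarrow> (\<forall>a. w a \<noteq> 0 \<longrightarrow> length a = d \<and> (\<forall>x\<in>set a. x < n))"

text \<open>a potential is non-zero iff it is non-zero in T(V)/[T(V),T(V)]\<close>
definition nonzero_potential :: "'k::comm_ring_1 ncp \<Rightarrow> bool" where
  "nonzero_potential w \<longleftrightarrow> w \<notin> lspan {(\<lambda>a. mono (u @ v) a - mono (v @ u) a) | u v. True}"

definition lin_indep_on :: "nat set \<Rightarrow> (nat \<Rightarrow> 'k::comm_ring_1 ncp) \<Rightarrow> bool" where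
  "lin_indep_on J r \<longleftrightarrow> (\<forall>c. (\<forall>a. (\<Sum>j\<in>J. c j * r j a) = 0) \<longrightarrow> (\<forall>j\<in>J. c j = 0))"

definition xdiff :: "nat \<Rightarrow> 'k::comm_ring_1 tt" where
  "xdiff i = tens (mono [i]) (mono []) - tens (mono []) (mono [i])"

definition one_tt :: "'k::comm_ring_1 tt" where
  "one_tt = tens (mono []) (mono [])"

text \<open>The complex C_w. Basis indices: V by {..<n}, R by J, kc(w) and A(x)A by {0}.
  lam i j is the coefficient of r_j in r_i = sum_{j in J} lam i j r_j, so r_i^*(r_j) = lam j i.\<close>
definition d1 :: "nat \<Rightarrow> nat \<Rightarrow> 'k::comm_ring_1 tt" where
  "d1 i = (\<lambda>c. if c = 0 then xdiff i else 0)"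

definition d2 :: "'k::comm_ring_1 ncp \<Rightarrow> nat \<Rightarrow> nat \<Rightarrow> 'k tt" where
  "d2 w j = (\<lambda>i. pder (cycder w j) i)"

definition d3 :: "nat \<Rightarrow> (nat \<Rightarrow> nat \<Rightarrow> 'k::comm_ring_1) \<Rightarrow> nat \<Rightarrow> nat \<Rightarrow> 'k tt" where
  "d3 n lam c = (\<lambda>j. \<Sum>i<n. (\<lambda>p. lam i j * xdiff i p))"

text \<open>The complex C_w^vee. Basis indices: 1^* and c(w)^* by {0}, V^* by {..<n}, R^* by J.\<close>
definition d1s :: "nat \<Rightarrow> nat \<Rightarrow> 'k::comm_ring_1 tt" where
  "d1s c = (\<lambda>i. xdiff i)"

definition d2s :: "'k::comm_ring_1 ncp \<Rightarrow> nat \<Rightarrow> nat \<Rightarrow> 'k tt" where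
  "d2s w i = (\<lambda>j. swap (pder (cycder w j) i))"

definition d3s :: "nat \<Rightarrow> nat set \<Rightarrow> (nat \<Rightarrow> nat \<Rightarrow> 'k::comm_ring_1) \<Rightarrow> nat \<Rightarrow> nat \<Rightarrow> 'k tt" where
  "d3s n J lam i = (\<lambda>c. if c = 0 then
      xdiff i + (\<Sum>j\<in>{..<n} - J. (\<lambda>p. lam j i * xdiff j p)) else 0)"

definition f0 :: "nat \<Rightarrow> nat \<Rightarrow> 'k::comm_ring_1 tt" where
  "f0 c = (\<lambda>c'. if c' = 0 then one_tt else 0)"

definition f1 :: "nat set \<Rightarrow> nat \<Rightarrow> nat \<Rightarrow> 'k::comm_ring_1 tt" where
  "f1 J i = (\<lambda>j. if i \<in> J \<and> j = i then one_tt else 0)"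

definition f2 :: "nat \<Rightarrow> nat \<Rightarrow> 'k::comm_ring_1 tt" where
  "f2 j = (\<lambda>i. if i = j then one_tt else 0)"

definition f3 :: "nat \<Rightarrow> nat \<Rightarrow> 'k::comm_ring_1 tt" where
  "f3 c = (\<lambda>c'. if c' = 0 then one_tt else 0)"

definition exact_at_Vstar :: "nat \<Rightarrow> 'k::comm_ring_1 ncp \<Rightarrow> nat set \<Rightarrow> bool" where
  "exact_at_Vstar n w J \<longleftrightarrow>
     (\<forall>X. (\<forall>i<n. fsupp (X i)) \<and> eqmod n w J (app {..<n} (d2s w) X) (\<lambda>_. 0)
        \<longrightarrow> (\<exists>Y. fsupp Y \<and> eqmod n w {..<n} X (app {0} d1s (\<lambda>_. Y))))"

end

theory Submission
  imports Defs
begin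

text \<open>
  All four claims reduce to explicit computations in the concrete model,
  together with one structural fact about the ideal: the kernel K of
  T(V)(x)T(V) \<rightarrow> A(x)A has no component of bidegree (a, b) with both a, b < N, because
  its generators are built from the cyclic derivatives r_i, which are homogeneous of
  degree N.  Hence neither x_m (x) 1 - 1 (x) x_m nor 1 (x) 1 is zero in A(x)A (N \<ge> 2).

  (i)  Both sides of f_1 d_2 = d_2^* f_2 evaluate to the same element because
       cyclic derivatives satisfy the symmetry  d_j w (a x_c b) = d_c w (b x_j a).
  (ii) If J is all of {0..n-1}, the expansion coefficients lam form the identity
       (linear independence of the r_j), and all maps reduce to x_i (x) 1 - 1 (x) x_i.
       Otherwise some m \<notin> J gives a component x_m (x) 1 - 1 (x) x_m on one side and 0
       on the other, contradicting the low-degree fact about K.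
  (iii) If m \<notin> J, the relation r_m = \<Sum> lam m j r_j yields a cocycle with constant
       coefficients in A(x)V^*(x)A whose x_m^*-coefficient is 1 (x) 1; any coboundary
       has vanishing (1 (x) 1)-coefficient, so exactness fails.
\<close>

lemma sum_fun_apply: "(\<Sum>i\<in>A. f i) x = (\<Sum>i\<in>A. f i x)"
  by (induction A rule: infinite_finite_induct) auto

lemma one_tt_apply: "one_tt (a, b) = (if a = [] \<and> b = [] then 1 else 0)"
  by (simp add: one_tt_def tens_def mono_def)

lemma sum_sum_single:
  assumes "finite A" "finite B" "i0 \<in> A" "j0 \<in> B"
  shows "(\<Sum>i\<in>A. \<Sum>j\<in>B. if i = i0 \<and> j = j0 then y else 0) = y"
proof -
  have "(\<Sum>j\<in>B. if i = i0 \<and> j = j0 then y else 0) = (if i = i0 then y else 0)" for i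
    using assms by (cases "i = i0") simp_all
  then show ?thesis using assms by simp
qed

lemma act_smult_one_left: "act (\<lambda>p. c * one_tt p) Z = (\<lambda>p. c * Z p)"
proof (rule ext, clarify)
  fix a b :: "nat list"
  have "act (\<lambda>p. c * one_tt p) Z (a, b) = (\<Sum>i\<in>{0..length a}. \<Sum>j\<in>{0..length b}.
      (if i = 0 \<and> j = length b then c * Z (a, b) else 0))"
    unfolding act_def by (auto simp: one_tt_apply intro!: sum.cong)
  also have "\<dots> = c * Z (a, b)" by (rule sum_sum_single) auto
  finally show "act (\<lambda>p. c * one_tt p) Z (a, b) = c * Z (a, b)" .
qed

lemma act_one_left [simp]: "act one_tt Z = Z"
  using act_smult_one_left[of 1 Z] by simp

lemma act_one_right [simp]: "act Y one_tt = Y"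
proof (rule ext, clarify)
  fix a b :: "nat list"
  have "act Y one_tt (a, b) = (\<Sum>i\<in>{0..length a}. \<Sum>j\<in>{0..length b}.
      (if i = length a \<and> j = 0 then Y (a, b) else 0))"
    unfolding act_def by (auto simp: one_tt_apply intro!: sum.cong)
  also have "\<dots> = Y (a, b)" by (rule sum_sum_single) auto
  finally show "act Y one_tt (a, b) = Y (a, b)" .
qed

lemma act_zero_right [simp]: "act Y 0 = 0"
  unfolding act_def by (auto simp: fun_eq_iff)

lemma act_zero_left [simp]: "act 0 Z = 0"
  unfolding act_def by (auto simp: fun_eq_iff)

lemma act_xdiff_unit_coeff: "act Y (xdiff m) ([], []) = 0"
  by (simp add: act_def xdiff_def tens_def mono_def)

section \<open>Symmetry of cyclic derivatives\<close>

definition cyc_sum :: "'k::comm_ring_1 ncp \<Rightarrow> nat list \<Rightarrow> 'k" where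
  "cyc_sum w t = (\<Sum>k<length t. w (rotate k t))"

lemma cyc_sum_rotate1: "cyc_sum w (rotate1 t) = cyc_sum w t"
proof -
  have "cyc_sum w (rotate1 t) = (\<Sum>k<length t. w (rotate (Suc k) t))"
    unfolding cyc_sum_def by (simp add: rotate1_rotate_swap)
  also have "\<dots> + w t = (\<Sum>k<Suc (length t). w (rotate k t))"
    by (subst sum.lessThan_Suc_shift) (simp del: rotate_Suc)
  also have "\<dots> = cyc_sum w t + w t"
    by (simp add: cyc_sum_def)
  finally show ?thesis by simp
qed

lemma cyc_sum_rotate: "cyc_sum w (rotate m t) = cyc_sum w t"
  by (induction m) (auto simp: cyc_sum_rotate1)

lemma cycder_eq_cyc_sum: "cycder w j s = cyc_sum w (s @ [j])"
proof -
  have "cycder w j s = (\<Sum>k<Suc (length s). w (drop k s @ [j] @ take k s))"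
    unfolding cycder_def by (simp add: atLeast0AtMost lessThan_Suc_atMost)
  also have "\<dots> = cyc_sum w (s @ [j])"
    unfolding cyc_sum_def by (auto simp: rotate_drop_take intro!: sum.cong)
  finally show ?thesis .
qed

text \<open>The coefficient of a x_c b in d_j w equals that of b x_j a in d_c w; in other
  words the matrix of second cyclic derivatives is symmetric up to the flip of (x).\<close>
lemma cycder_sym: "cycder w j (a @ [c] @ b) = cycder w c (b @ [j] @ a)"
proof -
  have "b @ [j] @ a @ [c] = rotate (length (a @ [c])) ((a @ [c]) @ (b @ [j]))"
    by (simp only: rotate_append) simp
  then show ?thesis
    using cyc_sum_rotate[of w "length (a @ [c])" "(a @ [c]) @ (b @ [j])"]
    by (simp add: cycder_eq_cyc_sum)
qed

lemma pder_cycder_sym: "pder (cycder w j) c = swap (pder (cycder w c) j)"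
  by (auto simp: fun_eq_iff pder_def swap_def cycder_sym[simplified])

section \<open>The ideal K has no low-degree part\<close>

lemma lspan_coeff_zero:
  assumes "\<forall>x\<in>S. x p = 0" and "z \<in> lspan S"
  shows "z p = 0"
  using assms(2) by (induction rule: lspan.induct) (auto simp: assms(1))

lemma ncmult_short:
  assumes "(\<forall>x. length x < N \<longrightarrow> q x = 0) \<or> (\<forall>x. length x < N \<longrightarrow> p x = 0)"
    and "length a < N"
  shows "ncmult p q a = 0"
  using assms unfolding ncmult_def by (intro sum.neutral) auto

lemma cycder_short:
  assumes "homogeneous_of_degree n (N + 1) w" "length a < N"
  shows "cycder w i a = 0"
  unfolding cycder_def
proof (intro sum.neutral ballI)
  fix j assume "j \<in> {0..length a}"
  then have "length (drop j a @ [i] @ take j a) \<noteq> N + 1" using assms(2) by auto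
  then show "w (drop j a @ [i] @ take j a) = 0"
    using assms(1) unfolding homogeneous_of_degree_def by blast
qed

lemma ideal_generator_short:
  assumes "homogeneous_of_degree n (N + 1) w" "length a < N"
  shows "ncmult (ncmult (mono u) (cycder w i)) (mono v) a = 0"
  using assms ncmult_short[of N "cycder w i"] cycder_short[OF assms(1)]
  by (intro ncmult_short) auto

lemma idealK_short:
  assumes "homogeneous_of_degree n (N + 1) w" "X \<in> idealK n w"
    and "length a < N" "length b < N"
  shows "X (a, b) = 0"
  using assms(2) unfolding idealK_def
  by (rule lspan_coeff_zero[rotated])
    (auto simp: tens_def ideal_generator_short[OF assms(1)] assms(3,4))

lemma xdiff_notin_idealK:
  assumes "homogeneous_of_degree n (N + 1) w" "N \<ge> 2"
  shows "xdiff m \<notin> idealK n w" and "- xdiff m \<notin> idealK n w"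
proof -
  have "X ([m], []) = 0" if "X \<in> idealK n w" for X :: "'a tt"
    using idealK_short[OF assms(1) that] assms(2) by simp
  moreover have "xdiff m ([m], []) = (1::'a)"
    by (simp add: xdiff_def tens_def mono_def)
  ultimately show "xdiff m \<notin> idealK n w" "- xdiff m \<notin> idealK n w"
    by force+
qed

lemma zero_in_idealK [simp]: "0 \<in> idealK n w"
  unfolding idealK_def by (rule lspan_zero)

lemma eqmod_refl: "(\<And>c. c \<in> C \<Longrightarrow> X c = Y c) \<Longrightarrow> eqmod n w C X Y"
  by (simp add: eqmod_def)

lemma app_single:
  assumes "finite B" "b0 \<in> B" and "\<And>b. b \<in> B \<Longrightarrow> b \<noteq> b0 \<Longrightarrow> act (X b) (g b c) = 0"
  shows "app B g X c = act (X b0) (g b0 c)"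
  unfolding app_def using assms by (subst sum.remove[of B b0]) (auto intro: sum.neutral)

lemma app_f1: "c \<in> J \<Longrightarrow> J \<subseteq> {..<n} \<Longrightarrow> app {..<n} (f1 J) X c = X c"
  by (subst app_single[of _ c]) (auto simp: f1_def)

lemma app_f2:
  assumes "finite J"
  shows "app J f2 X c = (if c \<in> J then X c else 0)"
proof (cases "c \<in> J")
  case True
  then show ?thesis using assms by (subst app_single[of _ c]) (auto simp: f2_def)
qed (auto simp: app_def f2_def intro: sum.neutral)

lemma app_d2s_f2: "j < n \<Longrightarrow> app {..<n} (d2s w) (f2 j) c = swap (pder (cycder w c) j)"
  by (subst app_single[of _ j]) (auto simp: f2_def d2s_def)

lemma app_d1s: "app {0} d1s (\<lambda>_. Y) m = act Y (xdiff m)"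
  by (simp add: app_def d1s_def)

lemma app_d1s_f3: "app {0} d1s (f3 c) m = xdiff m"
  by (simp add: app_def f3_def d1s_def)

lemma app_f0_d1: "app {0} f0 (d1 i) 0 = xdiff i"
  by (simp add: app_def f0_def d1_def)

lemma app_d3s_f1:
  assumes "finite J"
  shows "app J (d3s n J lam) (f1 J i) c = (if i \<in> J then d3s n J lam i c else 0)"
proof (cases "i \<in> J")
  case True
  then show ?thesis using assms by (subst app_single[of _ i]) (auto simp: f1_def)
qed (auto simp: app_def f1_def intro: sum.neutral)

lemma expansion_coeffs_identity:
  fixes r :: "nat \<Rightarrow> 'k::comm_ring_1 ncp"
  assumes indep: "lin_indep_on J r" and "finite J" and ij: "i \<in> J" "j \<in> J"
    and expand: "r i = (\<lambda>a. \<Sum>j\<in>J. lam i j * r j a)"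
  shows "lam i j = (if i = j then 1 else 0)"
proof -
  define c where "c = (\<lambda>j. lam i j - (if i = j then 1 else 0))"
  have "(\<Sum>j\<in>J. c j * r j a) = 0" for a
  proof -
    have "(\<Sum>j\<in>J. c j * r j a)
        = (\<Sum>j\<in>J. lam i j * r j a) - (\<Sum>j\<in>J. if i = j then r j a else 0)"
      unfolding c_def left_diff_distrib sum_subtractf by (auto intro!: sum.cong)
    also have "\<dots> = r i a - r i a"
      using \<open>finite J\<close> ij by (simp add: sum.delta fun_cong[OF expand])
    finally show ?thesis by simp
  qed
  then have "c j = 0" using indep ij unfolding lin_indep_on_def by blast
  then show ?thesis unfolding c_def by auto
qed

lemma d3_full:
  assumes "\<And>i j. i < n \<Longrightarrow> j < n \<Longrightarrow> lam i j = (if i = j then 1 else 0)" and "j < n"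
  shows "d3 n lam c j = xdiff j"
proof -
  have "d3 n lam c j = (\<Sum>i<n. if i = j then xdiff i else 0)"
    unfolding d3_def using assms by (intro sum.cong) (auto simp: fun_eq_iff)
  then show ?thesis using assms(2) by simp
qed

text \<open>A linear relation among the cyclic derivatives gives a 1-cocycle of C_w^vee with
  constant coefficients: d_2^* kills \<Sum>_i c_i (1 (x) x_i^* (x) 1).\<close>
lemma relation_cocycle:
  assumes rel: "\<And>s. (\<Sum>i<n. cc i * cycder w i s) = 0"
  shows "app {..<n} (d2s w) (\<lambda>i p. cc i * one_tt p) j = 0"
proof (rule ext, clarify)
  fix a b :: "nat list"
  have sym: "cycder w j (b @ i # a) = cycder w i (a @ j # b)" for i
    using cycder_sym[of w j b i a] by simp
  have "app {..<n} (d2s w) (\<lambda>i p. cc i * one_tt p) j (a, b)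
      = (\<Sum>i<n. cc i * cycder w i (a @ [j] @ b))"
    unfolding app_def
    by (simp add: act_smult_one_left sum_fun_apply d2s_def swap_def pder_def sym)
  then show "app {..<n} (d2s w) (\<lambda>i p. cc i * one_tt p) j (a, b) = 0 (a, b)"
    using rel by simp
qed

lemma relation_from_expansion:
  fixes lam :: "nat \<Rightarrow> nat \<Rightarrow> 'k::comm_ring_1"
  assumes "J \<subseteq> {..<n}" "m < n" "m \<notin> J"
    and expand: "cycder w m = (\<lambda>a. \<Sum>j\<in>J. lam m j * cycder w j a)"
  defines "cc \<equiv> \<lambda>i. if i = m then 1 else if i \<in> J then - lam m i else 0"
  shows "(\<Sum>i<n. cc i * cycder w i s) = 0"
proof -
  have "(\<Sum>i<n. cc i * cycder w i s)
      = cc m * cycder w m s + (\<Sum>i\<in>{..<n} - {m}. cc i * cycder w i s)"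
    using assms(2) by (intro sum.remove) auto
  also have "(\<Sum>i\<in>{..<n} - {m}. cc i * cycder w i s) = (\<Sum>j\<in>J. - lam m j * cycder w j s)"
    using assms(1,3) unfolding cc_def by (intro sum.mono_neutral_cong_right) auto
  also have "cc m * cycder w m s = (\<Sum>j\<in>J. lam m j * cycder w j s)"
    unfolding cc_def by (simp add: expand)
  finally show ?thesis by (simp add: sum_negf)
qed

lemma part_i:
  assumes "J \<subseteq> {..<n}" "j \<in> J"
  shows "eqmod n w J (app {..<n} (f1 J) (d2 w j)) (app {..<n} (d2s w) (f2 j))"
proof (rule eqmod_refl)
  fix c assume "c \<in> J"
  with assms have "c < n" "j < n" by auto
  with \<open>c \<in> J\<close> assms show "app {..<n} (f1 J) (d2 w j) c = app {..<n} (d2s w) (f2 j) c"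
    by (simp add: app_f1 app_d2s_f2 d2_def pder_cycder_sym[of w j c])
qed

lemma part_ii_a:
  assumes hom: "homogeneous_of_degree n (N + 1) w" and "N \<ge> 2" and J: "J \<subseteq> {..<n}"
    and lam_id: "\<And>i j. i \<in> J \<Longrightarrow> j \<in> J \<Longrightarrow> lam i j = (if i = j then 1 else 0)"
  shows "(\<forall>c\<in>{0::nat}. eqmod n w {..<n} (app J f2 (d3 n lam c)) (app {0} d1s (f3 c)))
    \<longleftrightarrow> J = {..<n}"
proof
  assume h: "\<forall>c\<in>{0::nat}. eqmod n w {..<n} (app J f2 (d3 n lam c)) (app {0} d1s (f3 c))"
  show "J = {..<n}"
  proof (rule ccontr)
    assume "J \<noteq> {..<n}"
    then obtain m where m: "m < n" "m \<notin> J" using J by blast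
    then have "app J f2 (d3 n lam 0) m - app {0} d1s (f3 0) m \<in> idealK n w"
      using h by (simp add: eqmod_def)
    then have "- xdiff m \<in> idealK n w"
      using m finite_subset[OF J] by (simp add: app_f2 app_d1s_f3)
    then show False using xdiff_notin_idealK[OF hom \<open>N \<ge> 2\<close>] by blast
  qed
next
  assume "J = {..<n}"
  then show "\<forall>c\<in>{0::nat}. eqmod n w {..<n} (app J f2 (d3 n lam c)) (app {0} d1s (f3 c))"
    using lam_id by (auto intro!: eqmod_refl simp: app_f2 app_d1s_f3 d3_full)
qed

lemma part_ii_b:
  assumes hom: "homogeneous_of_degree n (N + 1) w" and "N \<ge> 2" and J: "J \<subseteq> {..<n}"
  shows "(\<forall>i<n. eqmod n w {0} (app {0} f0 (d1 i)) (app J (d3s n J lam) (f1 J i)))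
    \<longleftrightarrow> J = {..<n}"
proof
  assume h: "\<forall>i<n. eqmod n w {0} (app {0} f0 (d1 i)) (app J (d3s n J lam) (f1 J i))"
  show "J = {..<n}"
  proof (rule ccontr)
    assume "J \<noteq> {..<n}"
    then obtain m where m: "m < n" "m \<notin> J" using J by blast
    then have "xdiff m \<in> idealK n w"
      using h finite_subset[OF J] by (auto simp: eqmod_def app_f0_d1 app_d3s_f1)
    then show False using xdiff_notin_idealK[OF hom \<open>N \<ge> 2\<close>] by blast
  qed
next
  assume "J = {..<n}"
  then show "\<forall>i<n. eqmod n w {0} (app {0} f0 (d1 i)) (app J (d3s n J lam) (f1 J i))"
    by (auto intro!: eqmod_refl simp: app_f0_d1 app_d3s_f1 d3s_def)
qed

lemma part_iii:
  assumes hom: "homogeneous_of_degree n (N + 1) w" and "N > 0" and J: "J \<subseteq> {..<n}"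
    and expand: "\<forall>i<n. cycder w i = (\<lambda>a. \<Sum>j\<in>J. lam i j * cycder w j a)"
    and exact: "exact_at_Vstar n w J"
  shows "J = {..<n}"
proof (rule ccontr)
  assume "J \<noteq> {..<n}"
  then obtain m where m: "m < n" "m \<notin> J" using J by blast
  define cc where "cc = (\<lambda>i. if i = m then 1 else if i \<in> J then - lam m i else (0::'a))"
  define X where "X = (\<lambda>i p. cc i * one_tt p)"
  have "(\<Sum>i<n. cc i * cycder w i s) = 0" for s
    unfolding cc_def using relation_from_expansion[OF J m] expand m by blast
  then have cocycle: "eqmod n w J (app {..<n} (d2s w) X) (\<lambda>_. 0)"
    unfolding X_def by (simp add: eqmod_def relation_cocycle)
  have "fsupp (X i)" for i
  proof -
    have "{p. X i p \<noteq> 0} \<subseteq> {([], [])}"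
      unfolding X_def by (auto simp: one_tt_apply split: if_splits)
    then show ?thesis unfolding fsupp_def using finite_subset by blast
  qed
  with cocycle obtain Y where "eqmod n w {..<n} X (app {0} d1s (\<lambda>_. Y))"
    using exact[unfolded exact_at_Vstar_def, rule_format, of X] by blast
  then have "X m - act Y (xdiff m) \<in> idealK n w"
    using m by (simp add: eqmod_def app_d1s)
  then have "(X m - act Y (xdiff m)) ([], []) = 0"
    by (rule idealK_short[OF hom]) (simp_all add: \<open>N > 0\<close>)
  then have "X m ([], []) = act Y (xdiff m) ([], [])"
    by simp
  moreover have "X m ([], []) = 1"
    by (simp add: X_def cc_def one_tt_apply)
  ultimately show False
    by (simp add: act_xdiff_unit_coeff)
qed

theorem proposition2p4:
  fixes n N :: nat and w :: "nat list \<Rightarrow> 'k::field_char_0"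
    and J :: "nat set" and lam :: "nat \<Rightarrow> nat \<Rightarrow> 'k"
  assumes "n \<ge> 1" and "N \<ge> 2"
    and "homogeneous_of_degree n (N + 1) w"
    and "nonzero_potential w"
    and "J \<subseteq> {..<n}"
    and "lin_indep_on J (cycder w)"
    and "\<forall>i<n. cycder w i = (\<lambda>a. \<Sum>j\<in>J. lam i j * cycder w j a)"
  shows "(\<forall>j\<in>J. eqmod n w J (app {..<n} (f1 J) (d2 w j)) (app {..<n} (d2s w) (f2 j)))
    \<and> ((\<forall>c\<in>{0::nat}. eqmod n w {..<n} (app J f2 (d3 n lam c)) (app {0} d1s (f3 c)))
         \<longleftrightarrow> card J = n)
    \<and> ((\<forall>i<n. eqmod n w {0} (app {0} f0 (d1 i)) (app J (d3s n J lam) (f1 J i)))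
         \<longleftrightarrow> card J = n)
    \<and> (exact_at_Vstar n w J \<longrightarrow> card J = n)"
proof -
  have finJ: "finite J" using assms(5) finite_subset by blast
  have card_full: "card J = n \<longleftrightarrow> J = {..<n}"
    using assms(5) card_subset_eq[of "{..<n}" J] by auto
  have lam_id: "lam i j = (if i = j then 1 else 0)" if "i \<in> J" "j \<in> J" for i j
  proof -
    have "i < n" using that assms(5) by auto
    then show ?thesis using expansion_coeffs_identity[OF assms(6) finJ that] assms(7) by simp
  qed
  have "N > 0" using assms(2) by simp
  show ?thesis
    unfolding card_full
  proof (intro conjI)
    show "\<forall>j\<in>J. eqmod n w J (app {..<n} (f1 J) (d2 w j)) (app {..<n} (d2s w) (f2 j))"
      using part_i[OF assms(5)] by blast
    show "exact_at_Vstar n w J \<longrightarrow> J = {..<n}"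
      using part_iii[OF assms(3) \<open>N > 0\<close> assms(5,7)] by blast
    show "(\<forall>c\<in>{0::nat}. eqmod n w {..<n} (app J f2 (d3 n lam c)) (app {0} d1s (f3 c)))
      \<longleftrightarrow> J = {..<n}"
      by (rule part_ii_a[OF assms(3,2,5) lam_id])
    show "(\<forall>i<n. eqmod n w {0} (app {0} f0 (d1 i)) (app J (d3s n J lam) (f1 J i)))
      \<longleftrightarrow> J = {..<n}"
      by (rule part_ii_b[OF assms(3,2,5)])
  qed
qed

end
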